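(* Let $p\ge 1$ and let $\hat I\subset\{1,\dots,p\}$. For each $\alpha\in\{1,2\}^p$ let $$A^\alpha=\{(\mu,\nu)\in\mathbb{R}^{2p}: \text{for all } i\in\hat I,\ \mu_i\ge0 \text{ if }\alpha_i=1 \text{ and } \nu_i\ge 0\text{ if }\alpha_i=2\},$$ and let points $(\mu^\alpha,\nu^\alpha)\in A^\alpha$ be given for every $\alpha\in\{1,2\}^p$. Let $B=\operatorname{conv}\{(\mu^\alpha,\nu^\alpha):\alpha\in\{1,2\}^p\}\subset\mathbb{R}^{2p}$. Then there exists $(\bar\mu,\bar\nu)\in B$ such that for all $i\in\hat I$, $$(\bar\mu_i>0\text{ and }\bar\nu_i>0)\ \text{ or }\ \bar\mu_i\bar\nu_i=0.$$ *)

theory Defs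
  imports "HOL-Analysis.Analysis"
begin

text \<open>Index set {1..p} is modelled by a finite type 'n (p = CARD('n) \<ge> 1).
  Sign patterns alpha in {1,2}^p are functions 'n \<Rightarrow> nat with values in {1,2}.\<close>

definition sign_patterns :: "('n::finite \<Rightarrow> nat) set" where
  "sign_patterns = {\<alpha>. \<forall>i. \<alpha> i \<in> {1,2}}"

definition A_set :: "'n::finite set \<Rightarrow> ('n \<Rightarrow> nat) \<Rightarrow> ((real^'n) \<times> (real^'n)) set" where
  "A_set Ihat \<alpha> = {(\<mu>::real^'n, \<nu>::real^'n). \<forall>i\<in>Ihat. (\<alpha> i = 1 \<longrightarrow> \<mu> $ i \<ge> 0) \<and> (\<alpha> i = 2 \<longrightarrow> \<nu> $ i \<ge> 0)}"

end

theory Submission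
  imports Defs
begin

text \<open>
  Mix the prescribed points with the multilinear weights
  \<open>w t \<alpha> = \<Prod>i. (if \<alpha> i = 2 then t\<^sub>i else 1 - t\<^sub>i)\<close>, \<open>t \<in> [0,1]\<^sup>p\<close>. On the face \<open>t\<^sub>i = 0\<close> only
  patterns with \<open>\<alpha> i = 1\<close> carry weight, so the mixed \<open>\<mu>\<^sub>i\<close> is nonnegative there; on the face
  \<open>t\<^sub>i = 1\<close> the mixed \<open>\<nu>\<^sub>i\<close> is nonnegative. A continuous function of \<open>(\<mu>\<^sub>i, \<nu>\<^sub>i)\<close> that is
  \<open>\<ge> 0\<close> when \<open>\<mu>\<^sub>i \<ge> 0\<close>, \<open>\<le> 0\<close> when \<open>\<nu>\<^sub>i \<ge> 0\<close>, and vanishes only where the desired alternative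
  holds therefore satisfies the boundary conditions of the Poincare-Miranda theorem, and a
  common zero of these functions gives the required point.
\<close>

lemma clamp_fixed_point_imp_eq_0:
  fixes a b x c :: real
  assumes "max a (min b (x + c)) = x" and "a \<le> b"
    and "x = a \<Longrightarrow> c \<ge> 0" and "x = b \<Longrightarrow> c \<le> 0"
  shows "c = 0"
  using assms by linarith

theorem poincare_miranda:
  fixes f :: "real^'n \<Rightarrow> real^'n"
  assumes le: "\<And>i. a $ i \<le> b $ i"
    and cont: "continuous_on (cbox a b) f"
    and lower: "\<And>t i. t \<in> cbox a b \<Longrightarrow> t $ i = a $ i \<Longrightarrow> f t $ i \<ge> 0"
    and upper: "\<And>t i. t \<in> cbox a b \<Longrightarrow> t $ i = b $ i \<Longrightarrow> f t $ i \<le> 0"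
  shows "\<exists>t\<in>cbox a b. f t = 0"
proof -
  define g where "g t = (\<chi> i. max (a $ i) (min (b $ i) (t $ i + f t $ i)))" for t
  have "continuous_on (cbox a b) g"
    unfolding g_def by (intro continuous_intros cont)
  moreover have "g \<in> cbox a b \<rightarrow> cbox a b"
    using le by (auto simp: g_def mem_box_cart)
  moreover have "cbox a b \<noteq> {}"
    using le by (auto simp: interval_ne_empty_cart)
  ultimately obtain t where t: "t \<in> cbox a b" "g t = t"
    using brouwer[of "cbox a b" g] by (auto simp: compact_cbox convex_box)
  have "f t $ i = 0" for i
  proof (rule clamp_fixed_point_imp_eq_0)
    show "max (a $ i) (min (b $ i) (t $ i + f t $ i)) = t $ i"
      using t(2) by (simp add: g_def vec_eq_iff)
  qed (use le lower upper t(1) in auto)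
  with t(1) show ?thesis
    by (auto simp: vec_eq_iff)
qed

definition sign_defect :: "real \<Rightarrow> real \<Rightarrow> real" where
  "sign_defect a b = max (- b) 0 + min 0 (max (- b) a)"

lemma continuous_on_sign_defect [continuous_intros]:
  "continuous_on S f \<Longrightarrow> continuous_on S g \<Longrightarrow> continuous_on S (\<lambda>x. sign_defect (f x) (g x))"
  unfolding sign_defect_def by (intro continuous_intros)

lemma sign_defect_nonneg: "a \<ge> 0 \<Longrightarrow> sign_defect a b \<ge> 0"
  unfolding sign_defect_def by auto

lemma sign_defect_nonpos: "b \<ge> 0 \<Longrightarrow> sign_defect a b \<le> 0"
  unfolding sign_defect_def by auto

lemma sign_defect_eq_0_imp: "sign_defect a b = 0 \<Longrightarrow> (a > 0 \<and> b > 0) \<or> a * b = 0"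
  unfolding sign_defect_def by (auto simp: max_def min_def split: if_splits)

lemma sign_patterns_eq_PiE: "(sign_patterns :: ('n::finite \<Rightarrow> nat) set) = PiE UNIV (\<lambda>_. {1,2})"
  unfolding sign_patterns_def by (auto simp: PiE_def extensional_def)

lemma finite_sign_patterns: "finite (sign_patterns :: ('n::finite \<Rightarrow> nat) set)"
  unfolding sign_patterns_eq_PiE by (rule finite_PiE) auto

definition pattern_weight :: "real^'n::finite \<Rightarrow> ('n \<Rightarrow> nat) \<Rightarrow> real" where
  "pattern_weight t \<alpha> = (\<Prod>i\<in>UNIV. if \<alpha> i = 2 then t $ i else 1 - t $ i)"

lemma continuous_on_pattern_weight [continuous_intros]:
  "continuous_on S (\<lambda>t. pattern_weight t \<alpha>)"
  unfolding pattern_weight_def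
proof (intro continuous_on_prod)
  show "continuous_on S (\<lambda>t. if \<alpha> i = 2 then t $ i else 1 - t $ i)" for i
    by (cases "\<alpha> i = 2") (auto intro!: continuous_intros)
qed

lemma pattern_weight_nonneg: "t \<in> cbox 0 1 \<Longrightarrow> pattern_weight t \<alpha> \<ge> 0"
  unfolding pattern_weight_def by (intro prod_nonneg) (auto simp: mem_box_cart)

lemma sum_pattern_weight: "(\<Sum>\<alpha>\<in>sign_patterns. pattern_weight t \<alpha>) = 1"
proof -
  have "(\<Prod>i\<in>UNIV. \<Sum>k\<in>{1::nat,2}. if k = 2 then t $ i else 1 - t $ i) = 1"
    by simp
  then show ?thesis
    unfolding pattern_weight_def sign_patterns_eq_PiE by (subst (asm) prod_sum_PiE) auto
qed

lemma pattern_weight_eq_0_lower: "t $ i = 0 \<Longrightarrow> \<alpha> i = 2 \<Longrightarrow> pattern_weight t \<alpha> = 0"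
  unfolding pattern_weight_def by (rule prod_zero) auto

lemma pattern_weight_eq_0_upper: "t $ i = 1 \<Longrightarrow> \<alpha> i \<noteq> 2 \<Longrightarrow> pattern_weight t \<alpha> = 0"
  unfolding pattern_weight_def by (rule prod_zero) auto

definition pattern_mixture :: "(('n::finite \<Rightarrow> nat) \<Rightarrow> 'a::real_normed_vector) \<Rightarrow> real^'n \<Rightarrow> 'a" where
  "pattern_mixture x t = (\<Sum>\<alpha>\<in>sign_patterns. pattern_weight t \<alpha> *\<^sub>R x \<alpha>)"

lemma continuous_on_pattern_mixture [continuous_intros]:
  "continuous_on S (pattern_mixture x)"
  unfolding pattern_mixture_def by (intro continuous_intros)

lemma pattern_mixture_in_convex_hull:
  assumes "t \<in> cbox 0 1"
  shows "pattern_mixture x t \<in> convex hull (x ` sign_patterns)"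
  unfolding pattern_mixture_def
  using assms by (intro convex_sum finite_sign_patterns convex_convex_hull)
    (auto simp: pattern_weight_nonneg sum_pattern_weight hull_inc)

lemma pattern_mixture_Pair:
  "pattern_mixture (\<lambda>\<alpha>. (x \<alpha>, y \<alpha>)) t = (pattern_mixture x t, pattern_mixture y t)"
  unfolding pattern_mixture_def by (simp add: prod_eq_iff fst_sum snd_sum)

lemma pattern_mixture_component_nonneg_lower:
  fixes x :: "('n::finite \<Rightarrow> nat) \<Rightarrow> real^'n"
  assumes "t \<in> cbox 0 1" and "t $ i = 0"
    and "\<And>\<alpha>. \<alpha> \<in> sign_patterns \<Longrightarrow> \<alpha> i = 1 \<Longrightarrow> x \<alpha> $ i \<ge> 0"
  shows "pattern_mixture x t $ i \<ge> 0"
  unfolding pattern_mixture_def sum_component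
proof (intro sum_nonneg)
  fix \<alpha> :: "'n \<Rightarrow> nat"
  assume \<alpha>: "\<alpha> \<in> sign_patterns"
  then consider "\<alpha> i = 1" | "\<alpha> i = 2"
    by (auto simp: sign_patterns_def)
  then show "(pattern_weight t \<alpha> *\<^sub>R x \<alpha>) $ i \<ge> 0"
  proof cases
    case 1
    with assms(1,3) \<alpha> show ?thesis
      by (simp add: pattern_weight_nonneg)
  next
    case 2
    with assms(2) show ?thesis
      by (simp add: pattern_weight_eq_0_lower)
  qed
qed

lemma pattern_mixture_component_nonneg_upper:
  fixes x :: "('n::finite \<Rightarrow> nat) \<Rightarrow> real^'n"
  assumes "t \<in> cbox 0 1" and "t $ i = 1"
    and "\<And>\<alpha>. \<alpha> \<in> sign_patterns \<Longrightarrow> \<alpha> i = 2 \<Longrightarrow> x \<alpha> $ i \<ge> 0"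
  shows "pattern_mixture x t $ i \<ge> 0"
  unfolding pattern_mixture_def sum_component
proof (intro sum_nonneg)
  fix \<alpha> :: "'n \<Rightarrow> nat"
  assume \<alpha>: "\<alpha> \<in> sign_patterns"
  show "(pattern_weight t \<alpha> *\<^sub>R x \<alpha>) $ i \<ge> 0"
  proof (cases "\<alpha> i = 2")
    case True
    with assms(1,3) \<alpha> show ?thesis
      by (simp add: pattern_weight_nonneg)
  next
    case False
    with assms(2) show ?thesis
      by (simp add: pattern_weight_eq_0_upper)
  qed
qed

definition defect_field :: "'n::finite set \<Rightarrow> (('n \<Rightarrow> nat) \<Rightarrow> real^'n) \<Rightarrow>
    (('n \<Rightarrow> nat) \<Rightarrow> real^'n) \<Rightarrow> real^'n \<Rightarrow> real^'n" where
  "defect_field Ihat mu nu t = (\<chi> i. if i \<in> Ihat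
      then sign_defect (pattern_mixture mu t $ i) (pattern_mixture nu t $ i) else 0)"

lemma continuous_on_defect_field: "continuous_on S (defect_field Ihat mu nu)"
  unfolding defect_field_def
proof (intro continuous_on_vec_lambda)
  show "continuous_on S (\<lambda>t. if i \<in> Ihat
      then sign_defect (pattern_mixture mu t $ i) (pattern_mixture nu t $ i) else 0)" for i
    by (cases "i \<in> Ihat") (auto intro!: continuous_intros)
qed

lemma defect_field_nonneg_lower:
  assumes "\<forall>\<alpha>\<in>sign_patterns. (mu \<alpha>, nu \<alpha>) \<in> A_set Ihat \<alpha>"
    and "t \<in> cbox 0 1" and "t $ i = 0"
  shows "defect_field Ihat mu nu t $ i \<ge> 0"
proof -
  have "i \<in> Ihat \<Longrightarrow> pattern_mixture mu t $ i \<ge> 0"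
    using assms by (intro pattern_mixture_component_nonneg_lower) (auto simp: A_set_def)
  then show ?thesis
    by (simp add: defect_field_def sign_defect_nonneg)
qed

lemma defect_field_nonpos_upper:
  assumes "\<forall>\<alpha>\<in>sign_patterns. (mu \<alpha>, nu \<alpha>) \<in> A_set Ihat \<alpha>"
    and "t \<in> cbox 0 1" and "t $ i = 1"
  shows "defect_field Ihat mu nu t $ i \<le> 0"
proof -
  have "i \<in> Ihat \<Longrightarrow> pattern_mixture nu t $ i \<ge> 0"
    using assms by (intro pattern_mixture_component_nonneg_upper) (auto simp: A_set_def)
  then show ?thesis
    by (simp add: defect_field_def sign_defect_nonpos)
qed

lemma defect_field_eq_0_imp:
  assumes "defect_field Ihat mu nu t = 0" and "i \<in> Ihat"
  shows "(pattern_mixture mu t $ i > 0 \<and> pattern_mixture nu t $ i > 0)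
    \<or> pattern_mixture mu t $ i * pattern_mixture nu t $ i = 0"
proof (rule sign_defect_eq_0_imp)
  have "defect_field Ihat mu nu t $ i = 0"
    using assms(1) by simp
  with assms(2) show "sign_defect (pattern_mixture mu t $ i) (pattern_mixture nu t $ i) = 0"
    by (simp add: defect_field_def)
qed

theorem lemma3p2:
  fixes Ihat :: "'n::finite set"
    and mu nu :: "('n \<Rightarrow> nat) \<Rightarrow> real^'n"
  assumes "\<forall>\<alpha>\<in>sign_patterns. (mu \<alpha>, nu \<alpha>) \<in> A_set Ihat \<alpha>"
  shows "\<exists>(mb, nb) \<in> convex hull ((\<lambda>\<alpha>. (mu \<alpha>, nu \<alpha>)) ` sign_patterns).
           \<forall>i\<in>Ihat. (mb $ i > 0 \<and> nb $ i > 0) \<or> mb $ i * nb $ i = 0"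
proof -
  have "\<exists>t\<in>cbox 0 1. defect_field Ihat mu nu t = 0"
    by (rule poincare_miranda)
      (use assms in \<open>auto intro: continuous_on_defect_field
          defect_field_nonneg_lower defect_field_nonpos_upper\<close>)
  then obtain t where t: "t \<in> cbox 0 1" "defect_field Ihat mu nu t = 0"
    by blast
  have "pattern_mixture (\<lambda>\<alpha>. (mu \<alpha>, nu \<alpha>)) t \<in> convex hull ((\<lambda>\<alpha>. (mu \<alpha>, nu \<alpha>)) ` sign_patterns)"
    using t(1) by (rule pattern_mixture_in_convex_hull)
  with defect_field_eq_0_imp[OF t(2)] show ?thesis
    by (auto simp: pattern_mixture_Pair)
qed

end
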